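(* Let $r\ge 3$, $k\ge 2r+13$, $m=\lfloor (k-1)/2\rfloor$, $f(n)=\binom{m}{r-1}(n-m)+\binom{m}{r}+\mathbb{1}_{2\mid k}\binom{m}{r-2}$, and $$N_{k,r}=\binom{r(k-1)}{r}+\binom{m}{r-1}m-\binom{m}{r}-\mathbb{1}_{2\mid k}\binom{m}{r-2}+r(k-1).$$ Let $n>N_{k,r}$ and let $\mathcal H$ be an $n$-vertex $r$-graph with no Berge-path of length $k$ and with at least $f(n)$ hyperedges. Let $\mathcal H'$ be obtained from $\mathcal H$ by repeatedly deleting a vertex whose degree in the current hypergraph is less than $\binom{m}{r-1}$, together with all hyperedges containing it, until no such vertex remains. Then $\mathcal H'$ has at least $r(k-1)$ vertices and minimum degree at least $\binom{m}{r-1}$.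
   Context: An $r$-graph is a simple $r$-uniform hypergraph; the degree of a vertex is the number of hyperedges containing it. A Berge-path of length $t$ is an alternating sequence $v_1,e_1,\dots,e_t,v_{t+1}$ of $t+1$ distinct vertices and $t$ distinct hyperedges with $\{v_i,v_{i+1}\}\subseteq e_i$. $\mathbb{1}_{2\mid k}$ is $1$ if $k$ is even and $0$ otherwise. *)

theory Defs
  imports Main
begin

definition r_graph :: "nat \<Rightarrow> 'a set \<Rightarrow> 'a set set \<Rightarrow> bool" where
  "r_graph r V E \<longleftrightarrow> finite V \<and> (\<forall>e\<in>E. e \<subseteq> V \<and> card e = r)"

definition hdegree :: "'a set set \<Rightarrow> 'a \<Rightarrow> nat" where
  "hdegree E v = card {e \<in> E. v \<in> e}"

definition berge_path :: "'a set \<Rightarrow> 'a set set \<Rightarrow> nat \<Rightarrow> 'a list \<Rightarrow> 'a set list \<Rightarrow> bool" where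
  "berge_path V E t vs es \<longleftrightarrow>
     length vs = t + 1 \<and> length es = t \<and> distinct vs \<and> distinct es \<and>
     set vs \<subseteq> V \<and> set es \<subseteq> E \<and>
     (\<forall>i<t. {vs ! i, vs ! (i+1)} \<subseteq> es ! i)"

definition has_berge_path :: "'a set \<Rightarrow> 'a set set \<Rightarrow> nat \<Rightarrow> bool" where
  "has_berge_path V E t \<longleftrightarrow> (\<exists>vs es. berge_path V E t vs es)"

definition peel_step :: "nat \<Rightarrow> ('a set \<times> 'a set set) \<Rightarrow> ('a set \<times> 'a set set) \<Rightarrow> bool" where
  "peel_step d H H' \<longleftrightarrow> (\<exists>v\<in>fst H. hdegree (snd H) v < d \<and>
      H' = (fst H - {v}, {e \<in> snd H. v \<notin> e}))"

definition peel_result :: "nat \<Rightarrow> ('a set \<times> 'a set set) \<Rightarrow> ('a set \<times> 'a set set) \<Rightarrow> bool" where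
  "peel_result d H H' \<longleftrightarrow> (peel_step d)\<^sup>*\<^sup>* H H' \<and> (\<forall>v\<in>fst H'. d \<le> hdegree (snd H') v)"

end

theory Submission
  imports Defs
begin

text \<open>Each deletion removes one vertex and fewer than \<open>d = binom(m, r-1)\<close> hyperedges, so
after deleting \<open>t\<close> vertices at least \<open>e(H) - (d-1)t\<close> hyperedges survive. If fewer than
\<open>r(k-1)\<close> vertices survived, the remaining \<open>r\<close>-graph would have at most \<open>binom(r(k-1), r)\<close>
hyperedges, and comparing with \<open>e(H) \<ge> f(n)\<close> would force \<open>n \<le> N\<^sub>k\<^sub>,\<^sub>r\<close>.\<close>

lemma r_graph_finite_edges: "r_graph r V E \<Longrightarrow> finite E"
  unfolding r_graph_def by (meson PowI finite_Pow_iff finite_subset subsetI)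

lemma r_graph_card_edges_le: "r_graph r V E \<Longrightarrow> card E \<le> card V choose r"
proof -
  assume "r_graph r V E"
  then have "E \<subseteq> {K. K \<subseteq> V \<and> card K = r}" and "finite V"
    unfolding r_graph_def by auto
  then have "card E \<le> card {K. K \<subseteq> V \<and> card K = r}"
    by (intro card_mono) simp_all
  with \<open>finite V\<close> show ?thesis
    by (simp add: n_subsets)
qed

lemma card_edges_split_at_vertex:
  "finite E \<Longrightarrow> card E = card {e \<in> E. v \<notin> e} + hdegree E v"
  unfolding hdegree_def
  by (subst card_Un_disjoint[symmetric]) (auto intro: arg_cong[where f = card])

lemma peel_steps_invariant:
  assumes "(peel_step d)\<^sup>*\<^sup>* (V, E) (V', E')" and "r_graph r V E"
  shows "r_graph r V' E' \<and> V' \<subseteq> V \<and>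
         card E + (card V - card V') \<le> card E' + d * (card V - card V')"
  using assms(1)
proof (induction rule: rtranclp_induct2)
  case refl
  then show ?case using assms(2) by simp
next
  case (step V1 E1 V2 E2)
  from step.hyps(2) obtain v where v: "v \<in> V1" "hdegree E1 v < d"
    and V2: "V2 = V1 - {v}" and E2: "E2 = {e \<in> E1. v \<notin> e}"
    unfolding peel_step_def by auto
  have IH: "r_graph r V1 E1" "V1 \<subseteq> V"
    "card E + (card V - card V1) \<le> card E1 + d * (card V - card V1)"
    using step.IH by auto
  have "finite V" using assms(2) unfolding r_graph_def by simp
  then have "finite V1" and "card V1 \<le> card V"
    using IH(2) finite_subset card_mono by auto
  moreover have "card V1 > 0"
    using \<open>finite V1\<close> v(1) card_gt_0_iff by blast
  moreover have "card V2 = card V1 - 1"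
    using v(1) V2 by (simp add: card_Diff_singleton)
  ultimately have "card V - card V2 = card V - card V1 + 1"
    by linarith
  moreover have "card E1 + 1 \<le> card E2 + d"
    using card_edges_split_at_vertex[OF r_graph_finite_edges[OF IH(1)], of v] v(2)
    unfolding E2 by linarith
  moreover have "r_graph r V2 E2"
    using IH(1) unfolding r_graph_def V2 E2 by auto
  moreover have "V2 \<subseteq> V"
    using IH(2) V2 by blast
  ultimately show ?case
    using IH(3) by (simp add: algebra_simps)
qed

lemma peel_result_small_core_edges_bound:
  assumes "peel_result d (V, E) (V', E')" and "r_graph r V E" and "card V' < A"
  shows "card E + card V < (A choose r) + d * card V + A"
proof -
  have inv: "r_graph r V' E' \<and> V' \<subseteq> V \<and>
      card E + (card V - card V') \<le> card E' + d * (card V - card V')"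
    using peel_steps_invariant assms(1,2) unfolding peel_result_def by blast
  have "card E' \<le> A choose r"
    using r_graph_card_edges_le[of r V' E'] binomial_right_mono[of "card V'" A r] inv assms(3)
    by linarith
  moreover have "d * (card V - card V') \<le> d * card V" by simp
  ultimately show ?thesis
    using inv assms(3) by linarith
qed

theorem mainTheorem3:
  fixes r k n :: nat and V :: "'a set" and E :: "'a set set"
    and V' :: "'a set" and E' :: "'a set set"
  assumes "r \<ge> 3" and "k \<ge> 2 * r + 13"
    and "r_graph r V E" and "card V = n"
    and "\<not> has_berge_path V E k"
    and "int n > int ((r * (k - 1)) choose r) + int ((((k - 1) div 2) choose (r - 1)) * ((k - 1) div 2))
           - int (((k - 1) div 2) choose r)
           - (if even k then int (((k - 1) div 2) choose (r - 2)) else 0)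
           + int (r * (k - 1))"
    and "int (card E) \<ge> int (((k - 1) div 2) choose (r - 1)) * (int n - int ((k - 1) div 2))
           + int (((k - 1) div 2) choose r)
           + (if even k then int (((k - 1) div 2) choose (r - 2)) else 0)"
    and "peel_result (((k - 1) div 2) choose (r - 1)) (V, E) (V', E')"
  shows "card V' \<ge> r * (k - 1) \<and> (\<forall>v\<in>V'. hdegree E' v \<ge> ((k - 1) div 2) choose (r - 1))"
proof
  show "\<forall>v\<in>V'. hdegree E' v \<ge> ((k - 1) div 2) choose (r - 1)"
    using assms(8) unfolding peel_result_def by auto
  define m where "m = (k - 1) div 2"
  define d where "d = m choose (r - 1)"
  define I where "I = (if even k then int (m choose (r - 2)) else 0)"
  define A where "A = r * (k - 1)"
  \<comment> \<open>Folding hides the truncated subtractions from \<open>linarith\<close>, which would otherwise case-split on them.\<close>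
  note bounds = assms(6,7)[folded m_def, folded d_def I_def A_def]
  show "card V' \<ge> r * (k - 1)"
  proof (rule ccontr)
    assume "\<not> ?thesis"
    then have "card E + n < (A choose r) + d * n + A"
      using peel_result_small_core_edges_bound[OF assms(8,3)] assms(4)
      unfolding A_def d_def m_def by simp
    then have "int (card E) + int n < int (A choose r) + int d * int n + int A"
      by (simp only: of_nat_add [symmetric] of_nat_mult [symmetric] of_nat_less_iff)
    moreover have "int d * (int n - int m) = int d * int n - int (d * m)"
      by (simp add: right_diff_distrib)
    ultimately show False
      using bounds by linarith
  qed
qed

end
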